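(* Let $\mathcal{X}$ be an infinite instance domain, $l\ge0$ an integer, and $\mathcal{C}^l$ the class of unions of at most $l$ singletons. Then for every integer $t\ge0$, $\mathcal{S}(\mathcal{C}^l,t)=\binom{t}{\le l}$.
   Context: $\mathcal{C}^l$ is the class of functions $\mathcal{X}\to\{-1,+1\}$ of the form $x\mapsto1-2I(x\in D)$ with $D\subseteq\mathcal{X}$, $|D|\le l$. $\binom{t}{\le l}=\sum_{i=0}^{l}\binom{t}{i}$. For a depth-$t$ $\mathcal{X}$-valued tree $\mathbf{x}=(\mathbf{x}_1,\dots,\mathbf{x}_t)$, $\mathbf{x}_s:\{\pm1\}^{s-1}\to\mathcal{X}$, let $S(\mathcal{H},\mathbf{x})=\{\epsilon\in\{\pm1\}^t:\exists h\in\mathcal{H},\ \epsilon_s=h(\mathbf{x}_s(\epsilon_1,\dots,\epsilon_{s-1}))\ \forall s\}$ and $\mathcal{S}(\mathcal{H},t)=\max_{\mathbf{x}}|S(\mathcal{H},\mathbf{x})|$ for $t\ge1$; $\mathcal{S}(\mathcal{H},0)=1$ if $\mathcal{H}\ne\emptyset$. *)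

theory Defs
  imports Main
begin

text \<open>Signs are represented as integers in {-1, 1}.  A depth-t X-valued tree
  x = (x_1,...,x_t), x_s : {+-1}^(s-1) -> X, is represented by a single function
  from sign-prefixes (int lists) to X: the node x_{s+1}(eps_1..eps_s) is
  x [eps_1,...,eps_s]. Only prefixes of length < t are relevant.\<close>

definition singleton_unions :: "nat \<Rightarrow> ('x \<Rightarrow> int) set" where
  "singleton_unions l = {h. \<exists>D. finite D \<and> card D \<le> l \<and>
      h = (\<lambda>x. 1 - 2 * (if x \<in> D then 1 else 0))}"

definition shattered_paths :: "('x \<Rightarrow> int) set \<Rightarrow> (int list \<Rightarrow> 'x) \<Rightarrow> nat \<Rightarrow> int list set" where
  "shattered_paths H x t = {\<epsilon>. length \<epsilon> = t \<and> set \<epsilon> \<subseteq> {-1, 1} \<and>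
      (\<exists>h\<in>H. \<forall>s<t. \<epsilon> ! s = h (x (take s \<epsilon>)))}"

definition seq_growth :: "('x \<Rightarrow> int) set \<Rightarrow> nat \<Rightarrow> nat" where
  "seq_growth H t = (if t = 0 then (if H \<noteq> {} then 1 else 0)
      else Max {card (shattered_paths H x t) | x. True})"

definition binom_le :: "nat \<Rightarrow> nat \<Rightarrow> nat" where
  "binom_le t l = (\<Sum>i\<le>l. t choose i)"

end

theory Submission
  imports Defs "HOL-Library.Countable"
begin

text \<open>A path through the tree that is labelled by some D with at most l elements is
  determined by the set of positions where it visits a node not seen before on the path
  and that node lies in D; such nodes are distinct elements of D, so there are at most
  \<open>binom_le t l\<close> such position sets. Conversely, on a tree with pairwise distinct nodes,
  every set of at most l positions is realised by labelling exactly the nodes at those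
  positions, and an infinite domain admits such a tree.\<close>

lemma card_subsets_card_le:
  assumes "finite A"
  shows "card {S. S \<subseteq> A \<and> card S \<le> l} = (\<Sum>i\<le>l. card A choose i)"
proof -
  have "{S. S \<subseteq> A \<and> card S \<le> l} = (\<Union>i\<le>l. {S. S \<subseteq> A \<and> card S = i})"
    by auto
  also have "card \<dots> = (\<Sum>i\<le>l. card {S. S \<subseteq> A \<and> card S = i})"
    using assms by (intro card_UN_disjoint) (auto intro: finite_subset[of _ "Pow A"])
  finally show ?thesis
    using assms by (simp add: n_subsets)
qed

definition path_labelled_by :: "(int list \<Rightarrow> 'x) \<Rightarrow> 'x set \<Rightarrow> int list \<Rightarrow> bool" where
  "path_labelled_by x D e \<longleftrightarrow> (\<forall>s<length e. e ! s = (if x (take s e) \<in> D then -1 else 1))"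

lemma shattered_paths_singleton_unions:
  "shattered_paths (singleton_unions l) x t =
     {e. length e = t \<and> (\<exists>D. finite D \<and> card D \<le> l \<and> path_labelled_by x D e)}"
  by (auto simp: shattered_paths_def singleton_unions_def path_labelled_by_def
      in_set_conv_nth)

lemma finite_shattered_paths: "finite (shattered_paths H x t)"
  by (rule finite_subset[OF _ finite_lists_length_eq[of "{-1, 1 :: int}" t]])
     (auto simp: shattered_paths_def)

definition fresh_negatives :: "(int list \<Rightarrow> 'x) \<Rightarrow> int list \<Rightarrow> nat set" where
  "fresh_negatives x e =
     {s. s < length e \<and> e ! s = -1 \<and> (\<forall>s'<s. x (take s' e) \<noteq> x (take s e))}"

lemma card_fresh_negatives_le:
  assumes "path_labelled_by x D e" and "finite D"
  shows "card (fresh_negatives x e) \<le> card D"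
proof -
  have "inj_on (\<lambda>s. x (take s e)) (fresh_negatives x e)"
    by (rule inj_onI) (metis (mono_tags, lifting) fresh_negatives_def mem_Collect_eq
        nat_neq_iff)
  moreover have "(\<lambda>s. x (take s e)) ` fresh_negatives x e \<subseteq> D"
    using assms(1) by (auto simp: fresh_negatives_def path_labelled_by_def split: if_splits)
  ultimately show ?thesis
    using assms(2) by (rule card_inj_on_le)
qed

lemma labelled_paths_eqI:
  assumes "path_labelled_by x D e" and "path_labelled_by x D' e'"
    and "length e = length e'" and "fresh_negatives x e = fresh_negatives x e'"
  shows "e = e'"
proof (rule nth_equalityI)
  show "length e = length e'" by fact
  have "e ! s = e' ! s" if "s < length e" for s
    using that
  proof (induction s rule: less_induct)
    case (less s)
    have same_prefix: "take s' e = take s' e'" if "s' \<le> s" for s'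
      using less that assms(3) by (intro nth_take_lemma) auto
    have label: "e ! s' = (if x (take s' e) \<in> D then -1 else 1)"
      "e' ! s' = (if x (take s' e) \<in> D' then -1 else 1)" if "s' \<le> s" for s'
      using assms(1,2,3) less.prems same_prefix[OF that] that
      by (auto simp: path_labelled_by_def)
    show ?case
    proof (cases "\<exists>s'<s. x (take s' e) = x (take s e)")
      case True
      then obtain s' where "s' < s" "x (take s' e) = x (take s e)" by blast
      then have "e ! s = e ! s'" and "e' ! s = e' ! s'"
        using label[of s] label[of s'] by auto
      then show ?thesis using less.IH \<open>s' < s\<close> less.prems by simp
    next
      case False
      then have "s \<in> fresh_negatives x e \<longleftrightarrow> e ! s = -1"
        and "s \<in> fresh_negatives x e' \<longleftrightarrow> e' ! s = -1"
        using less.prems assms(3) same_prefix by (auto simp: fresh_negatives_def)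
      then show ?thesis using assms(4) label[of s] by (auto split: if_splits)
    qed
  qed
  then show "e ! s = e' ! s" if "s < length e" for s using that .
qed

lemma card_shattered_paths_le:
  "card (shattered_paths (singleton_unions l) x t) \<le> binom_le t l"
proof -
  let ?P = "shattered_paths (singleton_unions l) x t"
  have "inj_on (fresh_negatives x) ?P"
    by (rule inj_onI) (auto simp: shattered_paths_singleton_unions intro: labelled_paths_eqI)
  moreover have "fresh_negatives x ` ?P \<subseteq> {S. S \<subseteq> {..<t} \<and> card S \<le> l}"
    by (auto simp: shattered_paths_singleton_unions fresh_negatives_def
        dest!: card_fresh_negatives_le intro: le_trans)
  ultimately have "card ?P \<le> card {S. S \<subseteq> {..<t} \<and> card S \<le> l}"
    by (rule card_inj_on_le) (auto intro: finite_subset[of _ "Pow {..<t}"])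
  then show ?thesis by (simp add: card_subsets_card_le binom_le_def)
qed

definition path_of_positions :: "nat \<Rightarrow> nat set \<Rightarrow> int list" where
  "path_of_positions t S = map (\<lambda>s. if s \<in> S then -1 else 1) [0..<t]"

lemma path_of_positions_shattered:
  assumes "inj x" and "S \<subseteq> {..<t}" and "card S \<le> l"
  shows "path_of_positions t S \<in> shattered_paths (singleton_unions l) x t"
proof -
  let ?e = "path_of_positions t S"
  let ?D = "(\<lambda>s. x (take s ?e)) ` S"
  have "finite S" using assms(2) finite_subset by blast
  then have "finite ?D" and "card ?D \<le> l"
    using assms(3) card_image_le le_trans by blast+
  have "x (take s ?e) \<in> ?D \<longleftrightarrow> s \<in> S" if "s < t" for s
  proof
    assume "x (take s ?e) \<in> ?D"
    then obtain s' where "s' \<in> S" and "take s' ?e = take s ?e"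
      using assms(1) by (auto simp: inj_eq)
    then have "length (take s' ?e) = length (take s ?e)" by simp
    then have "s' = s"
      using assms(2) \<open>s' \<in> S\<close> \<open>s < t\<close> by (auto simp: path_of_positions_def)
    with \<open>s' \<in> S\<close> show "s \<in> S" by simp
  qed blast
  then have "path_labelled_by x ?D ?e"
    by (simp add: path_labelled_by_def path_of_positions_def)
  with \<open>finite ?D\<close> \<open>card ?D \<le> l\<close> show ?thesis
    by (auto simp: shattered_paths_singleton_unions path_of_positions_def)
qed

lemma card_shattered_paths_inj:
  assumes "inj x"
  shows "card (shattered_paths (singleton_unions l) x t) = binom_le t l"
proof (rule antisym[OF card_shattered_paths_le])
  have "inj_on (path_of_positions t) {S. S \<subseteq> {..<t} \<and> card S \<le> l}"
    by (rule inj_onI) (force simp: path_of_positions_def list_eq_iff_nth_eq split: if_splits)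
  then have "card {S. S \<subseteq> {..<t} \<and> card S \<le> l} \<le> card (shattered_paths (singleton_unions l) x t)"
    using assms by (intro card_inj_on_le finite_shattered_paths) (auto intro: path_of_positions_shattered)
  then show "binom_le t l \<le> card (shattered_paths (singleton_unions l) x t)"
    by (simp add: card_subsets_card_le binom_le_def)
qed

lemma infinite_imp_inj_from_countable:
  assumes "infinite (UNIV :: 'x set)"
  obtains x :: "'c :: countable \<Rightarrow> 'x" where "inj x"
proof -
  obtain f :: "nat \<Rightarrow> 'x" where "inj f"
    using infinite_countable_subset[OF assms] by blast
  then show ?thesis using that[of "f \<circ> to_nat"] by (simp add: inj_compose)
qed

theorem mainTheorem18:
  fixes l t :: nat
  assumes "infinite (UNIV :: 'x set)"
  shows "seq_growth (singleton_unions l :: ('x \<Rightarrow> int) set) t = binom_le t l"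
proof (cases "t = 0")
  case True
  have "(\<lambda>_. 1) \<in> (singleton_unions l :: ('x \<Rightarrow> int) set)"
    unfolding singleton_unions_def by (intro CollectI exI[of _ "{}"]) auto
  moreover have "binom_le 0 l = 1"
    by (induction l) (auto simp: binom_le_def)
  ultimately show ?thesis using True by (auto simp: seq_growth_def)
next
  case False
  obtain x0 :: "int list \<Rightarrow> 'x" where "inj x0"
    using infinite_imp_inj_from_countable[OF assms] .
  let ?S = "{card (shattered_paths (singleton_unions l :: ('x \<Rightarrow> int) set) x t) | x. True}"
  have "Max ?S = binom_le t l"
  proof (rule Max_eqI)
    show "finite ?S"
      by (rule finite_subset[of _ "{..binom_le t l}"]) (auto intro: card_shattered_paths_le)
    show "binom_le t l \<in> ?S"
      using card_shattered_paths_inj[OF \<open>inj x0\<close>] by (auto intro!: exI[of _ x0])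
  qed (use card_shattered_paths_le in auto)
  then show ?thesis using False by (simp add: seq_growth_def)
qed

end
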